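(* Fix a positive integer $n$, a nonzero $n$-partition $\lambda$ with $\lambda_n=0$, and an $n$-semistandard tableau $T$ of shape $\lambda$. Let $w^1\le\dots\le w^{\lambda_1}$ be the minimal defining chain for $T$, and let $\pi^{(j,1)}$, $1\le j\le\lambda_1$, be the permutations produced by the greedy procedure. Then $w^j=\pi^{(j,1)}$ for $1\le j\le\lambda_1$.
   Context: Let $\lambda=(\lambda_1,\dots,\lambda_n)$ be weakly decreasing nonnegative integers with $\lambda_n=0$, $\lambda\ne0$, identified with its Young diagram; $c_j$ is the length of column $j$. Write $(j,i)$ for the box in column $j$, row $i$. Reading order: $(l,k)\le(j,i)$ iff $l<j$, or $l=j$ and $k\ge i$; convention $(j,c_j+1)$ means $(j-1,1)$. An $n$-semistandard tableau $T$ of shape $\lambda$ has entries in $[n]$, weakly increasing along rows, strictly increasing down columns; $T(j,i)$ is its entry and $C_j$ its $j$-th column. Permutations are in one-line form, compared in the Bruhat order. A defining chain for $T$ is a sequence $w^1\le\dots\le w^{\lambda_1}$ in Bruhat order of permutations such that for each $j$, $\{w^j_1,\dots,w^j_{c_j}\}$ is the set of entries of $C_j$. The minimal defining chain is the (existing, by a result of Deodhar) defining chain $w^1\le\dots\le w^{\lambda_1}$ such that for every defining chain $v^1\le\dots\le v^{\lambda_1}$ one has $w^j\le v^j$ for all $j$. Greedy procedure: $\pi^{(1,1)}$ has first $c_1$ entries those of $C_1$ increasing, followed by the rest of $[n]$ increasing. For $(j,i)$ with $j\ge2$ in reading order from $(2,c_2)$ to $(\lambda_1,1)$, define $\pi^{(j,i)}$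 from $\pi:=\pi^{(j,i+1)}$: if $T(j-1,i)=T(j,i)$ set $\pi^{(j,i)}=\pi$; otherwise let $i_0=i$, and given $i_{x-1}$ with $\pi_{i_{x-1}}<T(j,i)$ let $i_x$ be the smallest index $>c_j$ with $\pi_{i_{x-1}}<\pi_{i_x}\le T(j,i)$, stopping at $i_m$ with $\pi_{i_m}=T(j,i)$; set $\pi^{(j,i)}_{i_x}=\pi_{i_{x-1}}$ ($1\le x\le m$), $\pi^{(j,i)}_{i_0}=\pi_{i_m}$, others unchanged. *)

theory Defs
  imports "HOL-Combinatorics.Permutations"
begin

text \<open>A partition lambda = (lambda_1,...,lambda_n) is a function nat => nat, only
  the values at 1..n matter.\<close>

definition is_npartition :: "nat \<Rightarrow> (nat \<Rightarrow> nat) \<Rightarrow> bool" where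
  "is_npartition n lam \<longleftrightarrow> (\<forall>i j. 1 \<le> i \<longrightarrow> i \<le> j \<longrightarrow> j \<le> n \<longrightarrow> lam j \<le> lam i)"

definition col_len :: "nat \<Rightarrow> (nat \<Rightarrow> nat) \<Rightarrow> nat \<Rightarrow> nat" where
  "col_len n lam j = card {i \<in> {1..n}. j \<le> lam i}"

text \<open>T j i is the entry in column j, row i.\<close>
definition is_sstableau :: "nat \<Rightarrow> (nat \<Rightarrow> nat) \<Rightarrow> (nat \<Rightarrow> nat \<Rightarrow> nat) \<Rightarrow> bool" where
  "is_sstableau n lam T \<longleftrightarrow>
     (\<forall>j i. 1 \<le> j \<longrightarrow> j \<le> lam 1 \<longrightarrow> 1 \<le> i \<longrightarrow> i \<le> col_len n lam j \<longrightarrow> T j i \<in> {1..n}) \<and>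
     (\<forall>j i. 1 \<le> j \<longrightarrow> j + 1 \<le> lam 1 \<longrightarrow> 1 \<le> i \<longrightarrow> i \<le> col_len n lam (j + 1) \<longrightarrow>
            T j i \<le> T (j + 1) i) \<and>
     (\<forall>j i. 1 \<le> j \<longrightarrow> j \<le> lam 1 \<longrightarrow> 1 \<le> i \<longrightarrow> i + 1 \<le> col_len n lam j \<longrightarrow>
            T j i < T j (i + 1))"

definition col_set :: "nat \<Rightarrow> (nat \<Rightarrow> nat) \<Rightarrow> (nat \<Rightarrow> nat \<Rightarrow> nat) \<Rightarrow> nat \<Rightarrow> nat set" where
  "col_set n lam T j = T j ` {1..col_len n lam j}"

definition inv_count :: "nat \<Rightarrow> (nat \<Rightarrow> nat) \<Rightarrow> nat" where
  "inv_count n w = card {(a, b). 1 \<le> a \<and> a < b \<and> b \<le> n \<and> w b < w a}"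

definition bruhat_step :: "nat \<Rightarrow> (nat \<Rightarrow> nat) \<Rightarrow> (nat \<Rightarrow> nat) \<Rightarrow> bool" where
  "bruhat_step n u v \<longleftrightarrow> u permutes {1..n} \<and>
     (\<exists>a b. 1 \<le> a \<and> a < b \<and> b \<le> n \<and>
        v = (\<lambda>k. if k = a then u b else if k = b then u a else u k) \<and>
        inv_count n u < inv_count n v)"

definition bruhat_le :: "nat \<Rightarrow> (nat \<Rightarrow> nat) \<Rightarrow> (nat \<Rightarrow> nat) \<Rightarrow> bool" where
  "bruhat_le n u v \<longleftrightarrow> u permutes {1..n} \<and> v permutes {1..n} \<and> (bruhat_step n)\<^sup>*\<^sup>* u v"

definition defining_chain ::
  "nat \<Rightarrow> (nat \<Rightarrow> nat) \<Rightarrow> (nat \<Rightarrow> nat \<Rightarrow> nat) \<Rightarrow> (nat \<Rightarrow> nat \<Rightarrow> nat) \<Rightarrow> bool" where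
  "defining_chain n lam T w \<longleftrightarrow>
     (\<forall>j. 1 \<le> j \<longrightarrow> j \<le> lam 1 \<longrightarrow> w j permutes {1..n}) \<and>
     (\<forall>j. 1 \<le> j \<longrightarrow> j < lam 1 \<longrightarrow> bruhat_le n (w j) (w (j + 1))) \<and>
     (\<forall>j. 1 \<le> j \<longrightarrow> j \<le> lam 1 \<longrightarrow> w j ` {1..col_len n lam j} = col_set n lam T j)"

definition minimal_defining_chain ::
  "nat \<Rightarrow> (nat \<Rightarrow> nat) \<Rightarrow> (nat \<Rightarrow> nat \<Rightarrow> nat) \<Rightarrow> (nat \<Rightarrow> nat \<Rightarrow> nat) \<Rightarrow> bool" where
  "minimal_defining_chain n lam T w \<longleftrightarrow> defining_chain n lam T w \<and>
     (\<forall>v. defining_chain n lam T v \<longrightarrow>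
        (\<forall>j. 1 \<le> j \<longrightarrow> j \<le> lam 1 \<longrightarrow> bruhat_le n (w j) (v j)))"

definition greedy_init :: "nat \<Rightarrow> (nat \<Rightarrow> nat) \<Rightarrow> (nat \<Rightarrow> nat \<Rightarrow> nat) \<Rightarrow> nat \<Rightarrow> nat" where
  "greedy_init n lam T k =
     (let c = col_len n lam 1;
          C = sorted_list_of_set (col_set n lam T 1);
          R = sorted_list_of_set ({1..n} - col_set n lam T 1)
      in if 1 \<le> k \<and> k \<le> c then C ! (k - 1)
         else if c < k \<and> k \<le> n then R ! (k - c - 1)
         else k)"

fun greedy_idx :: "nat \<Rightarrow> nat \<Rightarrow> nat \<Rightarrow> nat \<Rightarrow> (nat \<Rightarrow> nat) \<Rightarrow> nat \<Rightarrow> nat" where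
  "greedy_idx n c t i p 0 = i"
| "greedy_idx n c t i p (Suc x) =
     (LEAST k. c < k \<and> k \<le> n \<and> p (greedy_idx n c t i p x) < p k \<and> p k \<le> t)"

text \<open>One step: from pi = pi^(j,i+1) to pi^(j,i).\<close>
definition greedy_step ::
  "nat \<Rightarrow> (nat \<Rightarrow> nat) \<Rightarrow> (nat \<Rightarrow> nat \<Rightarrow> nat) \<Rightarrow> nat \<Rightarrow> nat \<Rightarrow> (nat \<Rightarrow> nat) \<Rightarrow> (nat \<Rightarrow> nat)" where
  "greedy_step n lam T j i p =
     (if T (j - 1) i = T j i then p
      else
        (let c = col_len n lam j; t = T j i;
             s = greedy_idx n c t i p;
             m = (LEAST m. p (s m) = t)
         in (\<lambda>k. if k = s 0 then p (s m)
                 else if (\<exists>x. 1 \<le> x \<and> x \<le> m \<and> k = s x)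
                   then p (s ((SOME x. 1 \<le> x \<and> x \<le> m \<and> k = s x) - 1))
                 else p k)))"

text \<open>Process column j in reading order (rows c_j, c_j - 1, ..., 1),
  starting from pi^(j, c_j + 1) = pi^(j-1, 1); the result is pi^(j,1).\<close>
definition greedy_col ::
  "nat \<Rightarrow> (nat \<Rightarrow> nat) \<Rightarrow> (nat \<Rightarrow> nat \<Rightarrow> nat) \<Rightarrow> nat \<Rightarrow> (nat \<Rightarrow> nat) \<Rightarrow> (nat \<Rightarrow> nat)" where
  "greedy_col n lam T j p = fold (greedy_step n lam T j) (rev [1..<col_len n lam j + 1]) p"

text \<open>greedy n lam T j = pi^(j,1).\<close>
fun greedy :: "nat \<Rightarrow> (nat \<Rightarrow> nat) \<Rightarrow> (nat \<Rightarrow> nat \<Rightarrow> nat) \<Rightarrow> nat \<Rightarrow> (nat \<Rightarrow> nat)" where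
  "greedy n lam T 0 = greedy_init n lam T"
| "greedy n lam T (Suc 0) = greedy_init n lam T"
| "greedy n lam T (Suc (Suc j)) = greedy_col n lam T (Suc (Suc j)) (greedy n lam T (Suc j))"

end

theory Submission
  imports Defs
begin

text \<open>Compare permutations by Ehresmann's tableau criterion: u is below v when, for every prefix
  of positions and every threshold, u has at least as many small values in that prefix as v.
  This order contains the Bruhat order and is antisymmetric on permutations.
  A non-trivial greedy step composes the current permutation with a cycle that factors into
  Bruhat-increasing transpositions, so the greedy permutations form a defining chain.
  Moreover the minimality of each move in the greedy rule makes \<pi>^(j,1) least, in Ehresmann's
  order, among the permutations with j-th column C_j that lie above \<pi>^(j-1,1).
  For the minimal chain, w^j is Bruhat-below \<pi>^(j,1) by minimality, while by induction
  \<pi>^(j-1,1) = w^(j-1) \<le> w^j, so \<pi>^(j,1) lies below w^j in Ehresmann's order; antisymmetry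
  gives equality.\<close>

section \<open>Bruhat order and Ehresmann's criterion\<close>

lemma comp_transpose_eq:
  "u \<circ> transpose a b = (\<lambda>k. if k = a then u b else if k = b then u a else u k)"
  by (auto simp: fun_eq_iff transpose_def)

definition inversions :: "nat \<Rightarrow> (nat \<Rightarrow> nat) \<Rightarrow> (nat \<times> nat) set" where
  "inversions n w = {(a, b). 1 \<le> a \<and> a < b \<and> b \<le> n \<and> w b < w a}"

lemma inv_count_eq_card_inversions: "inv_count n w = card (inversions n w)"
  by (simp add: inv_count_def inversions_def)

lemma finite_inversions: "finite (inversions n w)"
  by (rule finite_subset[of _ "{1..n} \<times> {1..n}"]) (auto simp: inversions_def)

text \<open>\<psi> swaps the roles of a and b in a pair unless the pair has an entry strictly between them;
  it maps inversions of u injectively to inversions of u \<circ> transpose a b and misses (a, b).\<close>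
lemma inv_count_less_comp_transpose:
  assumes ab: "1 \<le> a" "a < b" "b \<le> n" and less: "u a < u b"
  shows "inv_count n u < inv_count n (u \<circ> transpose a b)"
proof -
  define v where "v = u \<circ> transpose a b"
  define between where "between x \<longleftrightarrow> a < x \<and> x < b" for x
  define \<psi> where "\<psi> = (\<lambda>(x, y). if between x \<or> between y then (x, y)
                                 else (transpose a b x, transpose a b y))"
  have "inj \<psi>"
    unfolding inj_def \<psi>_def between_def transpose_def using ab by (auto split: if_splits)
  have "\<psi> ` inversions n u \<subseteq> inversions n v"
    using ab less unfolding inversions_def \<psi>_def between_def v_def transpose_def
    by (auto split: if_splits)
  moreover have "(a, b) \<in> inversions n v" "(a, b) \<notin> \<psi> ` inversions n u"
    using ab less unfolding inversions_def \<psi>_def between_def v_def transpose_def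
    by (auto split: if_splits)
  ultimately have "card (\<psi> ` inversions n u) < card (inversions n v)"
    using finite_inversions by (intro psubset_card_mono) auto
  with \<open>inj \<psi>\<close> show ?thesis
    by (simp add: inv_count_eq_card_inversions v_def card_image inj_on_subset)
qed

lemma bruhat_step_comp_transpose:
  assumes "u permutes {1..n}" "1 \<le> a" "a < b" "b \<le> n" "u a < u b"
  shows "bruhat_step n u (u \<circ> transpose a b)"
  using assms inv_count_less_comp_transpose[of a b n u] unfolding bruhat_step_def
  by (intro conjI exI[of _ a] exI[of _ b]) (auto simp: comp_transpose_eq)

lemma bruhat_stepE:
  assumes "bruhat_step n u v"
  obtains a b where "u permutes {1..n}" "1 \<le> a" "a < b" "b \<le> n" "u a < u b"
    "v = u \<circ> transpose a b"
proof -
  from assms obtain a b where u: "u permutes {1..n}" and ab: "1 \<le> a" "a < b" "b \<le> n"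
    and v: "v = u \<circ> transpose a b" and grows: "inv_count n u < inv_count n v"
    unfolding bruhat_step_def comp_transpose_eq by blast
  have "u a \<noteq> u b" using permutes_inj[OF u] ab by (auto simp: inj_eq)
  moreover have "\<not> u b < u a"
  proof
    assume "u b < u a"
    hence "inv_count n v < inv_count n (v \<circ> transpose a b)"
      using ab v by (intro inv_count_less_comp_transpose) auto
    moreover have "v \<circ> transpose a b = u" using v by (simp add: comp_assoc)
    ultimately show False using grows by simp
  qed
  ultimately show thesis using that u ab v by simp
qed

lemma bruhat_le_trans: "bruhat_le n u v \<Longrightarrow> bruhat_le n v w \<Longrightarrow> bruhat_le n u w"
  unfolding bruhat_le_def by auto

definition ehresmann_le :: "nat \<Rightarrow> (nat \<Rightarrow> nat) \<Rightarrow> (nat \<Rightarrow> nat) \<Rightarrow> bool" where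
  "ehresmann_le n u v \<longleftrightarrow>
     (\<forall>k\<le>n. \<forall>a. card (v ` {1..k} \<inter> {..<a}) \<le> card (u ` {1..k} \<inter> {..<a}))"

lemma ehresmann_le_refl: "ehresmann_le n u u"
  by (simp add: ehresmann_le_def)

lemma ehresmann_le_trans: "ehresmann_le n u v \<Longrightarrow> ehresmann_le n v w \<Longrightarrow> ehresmann_le n u w"
  unfolding ehresmann_le_def by (meson le_trans)

lemma nat_set_eqI_card_below:
  fixes A B :: "nat set"
  assumes "finite A" "finite B" "\<And>a. card (A \<inter> {..<a}) = card (B \<inter> {..<a})"
  shows "A = B"
proof -
  have split: "card (X \<inter> {..<Suc x}) = card (X \<inter> {..<x}) + (if x \<in> X then 1 else 0)"
    if "finite X" for X :: "nat set" and x
  proof -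
    have "X \<inter> {..<Suc x} = (if x \<in> X then insert x (X \<inter> {..<x}) else X \<inter> {..<x})"
      by (auto simp: less_Suc_eq)
    thus ?thesis using that by auto
  qed
  have "x \<in> A \<longleftrightarrow> x \<in> B" for x
    using split[OF assms(1), of x] split[OF assms(2), of x] assms(3)[of x] assms(3)[of "Suc x"]
    by (auto split: if_splits)
  thus ?thesis by auto
qed

lemma permutes_eqI_prefix_images:
  fixes u v :: "nat \<Rightarrow> nat"
  assumes u: "u permutes {1..n}" and v: "v permutes {1..n}"
    and prefix: "\<And>k. k \<le> n \<Longrightarrow> u ` {1..k} = v ` {1..k}"
  shows "u = v"
proof
  fix k :: nat
  show "u k = v k"
  proof (cases "k \<in> {1..n}")
    case False
    thus ?thesis using u v by (simp add: permutes_not_in)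
  next
    case True
    hence "k - 1 \<le> n" "k \<le> n" by auto
    hence "u ` {1..k} = v ` {1..k}" "u ` {1..k - 1} = v ` {1..k - 1}" by (simp_all only: prefix)
    moreover have "{1..k} = insert k {1..k - 1}" using True by auto
    hence "u ` {1..k} - u ` {1..k - 1} = {u k}" "v ` {1..k} - v ` {1..k - 1} = {v k}"
      using permutes_inj[OF u] permutes_inj[OF v] by (auto simp: inj_eq)
    ultimately show ?thesis by simp
  qed
qed

lemma ehresmann_le_antisym:
  assumes "u permutes {1..n}" "v permutes {1..n}" "ehresmann_le n u v" "ehresmann_le n v u"
  shows "u = v"
proof (rule permutes_eqI_prefix_images[OF assms(1,2)])
  fix k assume "k \<le> n"
  thus "u ` {1..k} = v ` {1..k}"
    using assms(3,4) unfolding ehresmann_le_def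
    by (intro nat_set_eqI_card_below) (auto intro: le_antisym)
qed

lemma card_below_exchange_le:
  fixes A :: "nat set"
  assumes "finite A" "z \<in> A" "y \<notin> A" "z < y"
  shows "card (insert y (A - {z}) \<inter> {..<x}) \<le> card (A \<inter> {..<x})"
proof (cases "y < x")
  case True
  hence "insert y (A - {z}) \<inter> {..<x} = insert y (A \<inter> {..<x} - {z})" "z \<in> A \<inter> {..<x}"
    using assms by auto
  moreover have "0 < card (A \<inter> {..<x})" using calculation(2) assms(1) card_gt_0_iff by blast
  ultimately show ?thesis using assms by simp
next
  case False
  hence "insert y (A - {z}) \<inter> {..<x} \<subseteq> A \<inter> {..<x}" by auto
  thus ?thesis using assms by (simp add: card_mono)
qed

lemma image_comp_transpose_out:
  assumes "inj f" "a \<in> S" "b \<notin> S"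
  shows "(f \<circ> transpose a b) ` S = insert (f b) (f ` S - {f a})"
proof -
  have "(f \<circ> transpose a b) ` S = (f \<circ> transpose a b) ` insert a (S - {a})"
    using assms(2) by (simp add: insert_absorb)
  also have "\<dots> = insert (f b) (f ` (S - {a}))"
    using assms(3) by (auto simp: transpose_def intro!: image_cong)
  also have "\<dots> = insert (f b) (f ` S - {f a})"
    using assms(1) by (simp add: image_set_diff)
  finally show ?thesis .
qed

lemma bruhat_step_ehresmann_le:
  assumes "bruhat_step n u v"
  shows "ehresmann_le n u v"
  unfolding ehresmann_le_def
proof (intro allI impI)
  fix k x :: nat
  obtain a b where u: "u permutes {1..n}" and ab: "1 \<le> a" "a < b" "b \<le> n"
    and less: "u a < u b" and v: "v = u \<circ> transpose a b"
    using assms by (elim bruhat_stepE)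
  show "card (v ` {1..k} \<inter> {..<x}) \<le> card (u ` {1..k} \<inter> {..<x})"
  proof (cases "a \<le> k \<and> k < b")
    case True
    hence "a \<in> {1..k}" "b \<notin> {1..k}" using ab by auto
    hence "v ` {1..k} = insert (u b) (u ` {1..k} - {u a})"
      unfolding v by (rule image_comp_transpose_out[OF permutes_inj[OF u]])
    moreover have "u a \<in> u ` {1..k}" "u b \<notin> u ` {1..k}"
      using True ab permutes_inj[OF u] by (auto simp: inj_eq)
    ultimately show ?thesis using card_below_exchange_le less by simp
  next
    case False
    have "v ` {1..k} = u ` {1..k}"
    proof (cases "k < a")
      case True
      thus ?thesis using ab unfolding v by (auto simp: transpose_def intro!: image_cong)
    next
      case False
      hence "a \<in> {1..k}" "b \<in> {1..k}" using \<open>\<not> (a \<le> k \<and> k < b)\<close> ab by auto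
      thus ?thesis unfolding v by (rule swap_image_eq)
    qed
    thus ?thesis by simp
  qed
qed

lemma bruhat_le_ehresmann_le:
  assumes "bruhat_le n u v"
  shows "ehresmann_le n u v"
proof -
  have "(bruhat_step n)\<^sup>*\<^sup>* u v" using assms by (simp add: bruhat_le_def)
  thus ?thesis
    by (induction rule: rtranclp_induct)
       (auto intro: ehresmann_le_refl ehresmann_le_trans bruhat_step_ehresmann_le)
qed

section \<open>A single greedy step\<close>

definition greedy_cycle :: "nat \<Rightarrow> nat \<Rightarrow> nat \<Rightarrow> nat \<Rightarrow> (nat \<Rightarrow> nat) \<Rightarrow> nat \<Rightarrow> nat" where
  "greedy_cycle n c t i p =
     (let s = greedy_idx n c t i p;
          m = (LEAST m. p (s m) = t)
      in (\<lambda>k. if k = s 0 then p (s m)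
              else if (\<exists>x. 1 \<le> x \<and> x \<le> m \<and> k = s x)
                then p (s ((SOME x. 1 \<le> x \<and> x \<le> m \<and> k = s x) - 1))
              else p k))"

lemma greedy_step_eq_greedy_cycle:
  "greedy_step n lam T j i p =
     (if T (j - 1) i = T j i then p else greedy_cycle n (col_len n lam j) (T j i) i p)"
  by (simp add: greedy_step_def greedy_cycle_def Let_def)

declare greedy_idx.simps(2) [simp del] \<comment> \<open>s (Suc x) is used only through s_Suc below\<close>

text \<open>A non-trivial greedy step \<pi>^(j,i+1) \<rightarrow> \<pi>^(j,i), with c = c_j and t = T(j,i).\<close>
locale greedy_cycle_data =
  fixes n c t i :: nat and p :: "nat \<Rightarrow> nat"
  assumes perm: "p permutes {1..n}"
    and row: "1 \<le> i" "i \<le> c" "c \<le> n"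
    and target: "p i < t" "t \<le> n"
    and window_free: "\<And>q. q \<in> {1..c} \<Longrightarrow> \<not> (p i < p q \<and> p q \<le> t)"
begin

abbreviation s :: "nat \<Rightarrow> nat" where
  "s \<equiv> greedy_idx n c t i p"

lemma target_position: "\<exists>q. c < q \<and> q \<le> n \<and> p q = t"
proof -
  have "p i \<in> {1..n}" using row permutes_in_image[OF perm] by auto
  hence "t \<in> {1..n}" using target by auto
  then obtain q where q: "q \<in> {1..n}" "p q = t"
    using permutes_image[OF perm] by (metis imageE)
  moreover have "c < q" using window_free[of q] q target by (cases "q \<le> c") auto
  ultimately show ?thesis by auto
qed

lemma s_Suc:
  assumes "p (s x) < t"
  shows "c < s (Suc x)" "s (Suc x) \<le> n" "p (s x) < p (s (Suc x))" "p (s (Suc x)) \<le> t"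
    and "\<And>k. c < k \<Longrightarrow> k \<le> n \<Longrightarrow> p (s x) < p k \<Longrightarrow> p k \<le> t \<Longrightarrow> s (Suc x) \<le> k"
proof -
  obtain q where "c < q" "q \<le> n" "p q = t" using target_position by blast
  hence ex: "\<exists>k. c < k \<and> k \<le> n \<and> p (s x) < p k \<and> p k \<le> t" using assms by auto
  show "c < s (Suc x)" "s (Suc x) \<le> n" "p (s x) < p (s (Suc x))" "p (s (Suc x)) \<le> t"
    using LeastI_ex[OF ex] by (simp_all add: greedy_idx.simps(2))
  show "\<And>k. c < k \<Longrightarrow> k \<le> n \<Longrightarrow> p (s x) < p k \<Longrightarrow> p k \<le> t \<Longrightarrow> s (Suc x) \<le> k"
    by (simp add: greedy_idx.simps(2) Least_le)
qed

text \<open>The values p (s x) strictly increase while they stay below t, so t is eventually hit.\<close>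
lemma target_hit: "\<exists>x. p (s x) = t"
proof (rule ccontr)
  assume miss: "\<nexists>x. p (s x) = t"
  have "p (s x) < t \<and> p i + x \<le> p (s x)" for x
  proof (induction x)
    case (Suc x)
    hence "p (s x) < p (s (Suc x))" "p (s (Suc x)) \<le> t" using s_Suc(3,4)[of x] by auto
    moreover have "p (s (Suc x)) \<noteq> t" using miss by blast
    ultimately show ?case using Suc by simp
  qed (use target in simp)
  from this[of t] show False by linarith
qed

definition m :: nat where
  "m = (LEAST m. p (s m) = t)"

lemma p_s_m: "p (s m) = t"
  unfolding m_def using target_hit by (rule LeastI_ex)

lemma p_s_less_target: "y < m \<Longrightarrow> p (s y) < t"
proof (induction y)
  case 0 thus ?case using target by simp
next
  case (Suc y)
  have "p (s (Suc y)) \<le> t" using s_Suc(4) Suc by simp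
  moreover have "p (s (Suc y)) \<noteq> t" using Suc.prems not_less_Least unfolding m_def by blast
  ultimately show ?case by simp
qed

lemmas s_Suc_below_m = s_Suc[OF p_s_less_target]

lemma s_beyond_column: "1 \<le> y \<Longrightarrow> y \<le> m \<Longrightarrow> c < s y \<and> s y \<le> n"
  using s_Suc_below_m(1,2)[of "y - 1"] by simp

lemma p_s_strict_mono: "x < y \<Longrightarrow> y \<le> m \<Longrightarrow> p (s x) < p (s y)"
proof (induction y)
  case (Suc y)
  thus ?case using s_Suc_below_m(3)[of y] by (auto simp: less_Suc_eq)
qed simp

text \<open>s (Suc x) is the least admissible index for the bound p (s x); since p (s x) is a weaker
  bound than p (s (x - 1)), the index s x was already admissible for it.\<close>
lemma s_less_Suc: "x < m \<Longrightarrow> s x < s (Suc x)"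
proof (cases x)
  case 0
  assume "x < m" thus ?thesis using 0 s_Suc_below_m(1)[of 0] row by simp
next
  case (Suc x')
  assume "x < m"
  hence "s x \<le> s (Suc x)"
    using Suc s_Suc_below_m(5)[of x' "s (Suc x)"] s_Suc_below_m(1-4)[of x] p_s_strict_mono[of x' x]
    by simp
  moreover have "s x \<noteq> s (Suc x)" using s_Suc_below_m(3)[of x] \<open>x < m\<close> by auto
  ultimately show ?thesis by simp
qed

lemma s_strict_mono: "x < y \<Longrightarrow> y \<le> m \<Longrightarrow> s x < s y"
proof (induction y)
  case (Suc y)
  thus ?case using s_less_Suc[of y] by (auto simp: less_Suc_eq)
qed simp

lemma i_le_s: "y \<le> m \<Longrightarrow> i \<le> s y"
  using s_strict_mono[of 0 y] by (cases y) auto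

lemma window_free_before_s:
  assumes "r < m" "1 \<le> q" "q < s (Suc r)" "p (s r) < p q" "p q \<le> t"
  shows False
proof (cases "q \<le> c")
  case True
  have "p i \<le> p (s r)" using p_s_strict_mono[of 0 r] assms(1) by (cases r) auto
  thus False using window_free[of q] True assms by auto
next
  case False
  thus False using s_Suc_below_m(5)[OF assms(1), of q] s_Suc_below_m(2)[OF assms(1)] assms by simp
qed

primrec partial_cycle :: "nat \<Rightarrow> nat \<Rightarrow> nat" where
  "partial_cycle 0 = p"
| "partial_cycle (Suc x) = partial_cycle x \<circ> transpose i (s (Suc x))"

declare partial_cycle.simps(2) [simp del] \<comment> \<open>stored eta-expanded; keep the composition\<close>

lemma partial_cycle_Suc [simp]: "partial_cycle (Suc x) = partial_cycle x \<circ> transpose i (s (Suc x))"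
  by (simp add: fun_eq_iff partial_cycle.simps(2))

lemma s_notin_earlier: "x < y \<Longrightarrow> y \<le> m \<Longrightarrow> s y \<notin> s ` {0..x}"
proof
  assume "x < y" "y \<le> m" "s y \<in> s ` {0..x}"
  then obtain z where "z \<le> x" "s y = s z" by auto
  thus False using s_strict_mono[of z y] \<open>x < y\<close> \<open>y \<le> m\<close> by simp
qed

lemma mem_s_image: "k \<in> s ` {0..x} \<Longrightarrow> k = i \<or> (\<exists>y. 1 \<le> y \<and> y \<le> x \<and> k = s y)"
proof -
  assume "k \<in> s ` {0..x}"
  then obtain y where "y \<le> x" "k = s y" by auto
  thus ?thesis by (cases y) auto
qed

lemma partial_cycle_other: "x \<le> m \<Longrightarrow> k \<notin> s ` {0..x} \<Longrightarrow> partial_cycle x k = p k"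
proof (induction x)
  case (Suc x)
  have "i \<in> s ` {0..Suc x}" "s (Suc x) \<in> s ` {0..Suc x}" "s ` {0..x} \<subseteq> s ` {0..Suc x}"
    by (auto intro: image_eqI[of i s 0])
  hence "k \<noteq> i" "k \<noteq> s (Suc x)" "k \<notin> s ` {0..x}" using Suc.prems(2) by blast+
  thus ?case using Suc by simp
qed simp

lemma partial_cycle_row: "x \<le> m \<Longrightarrow> partial_cycle x i = p (s x)"
proof (induction x)
  case (Suc x)
  thus ?case using partial_cycle_other[of x "s (Suc x)"] s_notin_earlier[of x "Suc x"] by simp
qed simp

lemma partial_cycle_s: "1 \<le> y \<Longrightarrow> y \<le> x \<Longrightarrow> x \<le> m \<Longrightarrow> partial_cycle x (s y) = p (s (y - 1))"
proof (induction x)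
  case (Suc x)
  show ?case
  proof (cases "y = Suc x")
    case True
    thus ?thesis using partial_cycle_row[of x] Suc.prems by simp
  next
    case False
    hence "s y \<noteq> i" "s y \<noteq> s (Suc x)"
      using s_beyond_column[of y] s_strict_mono[of y "Suc x"] row Suc.prems by auto
    thus ?thesis using Suc False by simp
  qed
qed simp

lemma partial_cycle_permutes: "x \<le> m \<Longrightarrow> partial_cycle x permutes {1..n}"
proof (induction x)
  case (Suc x)
  have "i \<in> {1..n}" "s (Suc x) \<in> {1..n}" using row s_beyond_column[of "Suc x"] Suc.prems by auto
  hence "transpose i (s (Suc x)) permutes {1..n}" by (rule permutes_swap_id)
  moreover have "partial_cycle x permutes {1..n}" using Suc by simp
  ultimately show ?case by (simp only: partial_cycle_Suc permutes_compose)
qed (use perm in simp)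

lemma partial_cycle_bruhat_steps: "x \<le> m \<Longrightarrow> (bruhat_step n)\<^sup>*\<^sup>* p (partial_cycle x)"
proof (induction x)
  case (Suc x)
  have step: "bruhat_step n (partial_cycle x) (partial_cycle x \<circ> transpose i (s (Suc x)))"
  proof (rule bruhat_step_comp_transpose)
    show "partial_cycle x permutes {1..n}" using Suc.prems by (intro partial_cycle_permutes) simp
    show "1 \<le> i" "i < s (Suc x)" "s (Suc x) \<le> n"
      using row s_beyond_column[of "Suc x"] Suc.prems by auto
    show "partial_cycle x i < partial_cycle x (s (Suc x))"
      using partial_cycle_row[of x] partial_cycle_other[of x "s (Suc x)"]
        s_notin_earlier[of x "Suc x"] p_s_strict_mono[of x "Suc x"] Suc.prems by simp
  qed
  have star: "(bruhat_step n)\<^sup>*\<^sup>* p (partial_cycle x)" using Suc by simp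
  show ?case unfolding partial_cycle_Suc
    by (rule rtranclp.rtrancl_into_rtrancl[of "bruhat_step n", OF star step])
qed simp

lemma greedy_cycle_apply:
  "greedy_cycle n c t i p k =
     (if k = i then p (s m)
      else if \<exists>x. 1 \<le> x \<and> x \<le> m \<and> k = s x
        then p (s ((SOME x. 1 \<le> x \<and> x \<le> m \<and> k = s x) - 1))
      else p k)"
  unfolding greedy_cycle_def Let_def m_def by simp

lemma greedy_cycle_eq_partial_cycle: "greedy_cycle n c t i p = partial_cycle m"
proof
  fix k
  consider "k = i" | "k \<noteq> i" "\<exists>x. 1 \<le> x \<and> x \<le> m \<and> k = s x"
    | "k \<noteq> i" "\<nexists>x. 1 \<le> x \<and> x \<le> m \<and> k = s x"
    by blast
  thus "greedy_cycle n c t i p k = partial_cycle m k"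
  proof cases
    case 1
    thus ?thesis by (simp add: greedy_cycle_apply partial_cycle_row)
  next
    case 2
    define y where "y = (SOME x. 1 \<le> x \<and> x \<le> m \<and> k = s x)"
    have "greedy_cycle n c t i p k = p (s (y - 1))"
      by (simp only: greedy_cycle_apply if_not_P[OF 2(1)] if_P[OF 2(2)] y_def)
    moreover have "1 \<le> y \<and> y \<le> m \<and> k = s y" unfolding y_def using 2(2) by (rule someI_ex)
    ultimately show ?thesis using partial_cycle_s[of y m] by simp
  next
    case 3
    hence "k \<notin> s ` {0..m}" using mem_s_image by blast
    hence "partial_cycle m k = p k" by (simp add: partial_cycle_other)
    thus ?thesis by (simp only: greedy_cycle_apply if_not_P[OF 3(1)] if_not_P[OF 3(2)])
  qed
qed

abbreviation p' :: "nat \<Rightarrow> nat" where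
  "p' \<equiv> greedy_cycle n c t i p"

lemma cycle_permutes: "p' permutes {1..n}"
  using partial_cycle_permutes[of m] greedy_cycle_eq_partial_cycle by simp

lemma cycle_bruhat_le: "bruhat_le n p p'"
  using partial_cycle_bruhat_steps[of m] cycle_permutes perm greedy_cycle_eq_partial_cycle
  unfolding bruhat_le_def by simp

lemma cycle_row: "p' i = t"
  using partial_cycle_row[of m] p_s_m greedy_cycle_eq_partial_cycle by simp

lemma cycle_column:
  assumes "q \<in> {1..c}" "q \<noteq> i"
  shows "p' q = p q"
proof -
  have "q \<notin> s ` {0..m}"
  proof
    assume "q \<in> s ` {0..m}"
    then obtain y where "1 \<le> y" "y \<le> m" "q = s y" using mem_s_image assms(2) by blast
    thus False using s_beyond_column[of y] assms(1) by auto
  qed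
  thus ?thesis using partial_cycle_other[of m q] greedy_cycle_eq_partial_cycle by simp
qed

lemma partial_cycle_image_before:
  assumes "k < i" "x \<le> m"
  shows "partial_cycle x ` {1..k} = p ` {1..k}"
proof (rule image_cong)
  fix q assume "q \<in> {1..k}"
  have "q \<notin> s ` {0..x}"
  proof
    assume "q \<in> s ` {0..x}"
    then obtain y where "y \<le> x" "q = s y" by auto
    thus False using i_le_s[of y] assms \<open>q \<in> {1..k}\<close> by simp
  qed
  thus "partial_cycle x q = p q" using partial_cycle_other assms by blast
qed simp

lemma partial_cycle_image_after:
  "x \<le> r \<Longrightarrow> r \<le> m \<Longrightarrow> s r \<le> k \<Longrightarrow> partial_cycle x ` {1..k} = p ` {1..k}"
proof (induction x)
  case (Suc x)
  have "s (Suc x) \<le> s r" using s_strict_mono[of "Suc x" r] Suc.prems by (cases "Suc x = r") auto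
  hence "i \<in> {1..k}" "s (Suc x) \<in> {1..k}"
    using Suc.prems s_beyond_column[of "Suc x"] row i_le_s[of r] by auto
  hence "partial_cycle (Suc x) ` {1..k} = partial_cycle x ` {1..k}"
    unfolding partial_cycle_Suc by (rule swap_image_eq)
  thus ?case using Suc by simp
qed simp

lemma partial_cycle_image_crossing:
  assumes r: "r < m" "s r \<le> k" "k < s (Suc r)"
  shows "r \<le> x \<Longrightarrow> x \<le> m \<Longrightarrow>
    partial_cycle x ` {1..k} = insert (p (s x)) (p ` {1..k} - {p (s r)})"
proof (induction x rule: nat_induct_at_least)
  case base
  have "s r \<in> {1..k}" using r i_le_s[of r] row by simp
  hence "p (s r) \<in> p ` {1..k}" by blast
  thus ?case using partial_cycle_image_after[of r r k] r by (simp add: insert_absorb)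
next
  case (Suc x)
  have "s (Suc r) \<le> s (Suc x)" using s_strict_mono[of "Suc r" "Suc x"] Suc by (cases "x = r") auto
  hence outside: "s (Suc x) \<notin> {1..k}" using r by simp
  have "s (Suc r) \<le> s x" if "x \<noteq> r"
    using s_strict_mono[of "Suc r" x] Suc that by (cases "x = Suc r") auto
  hence "s x \<notin> {1..k}" if "x \<noteq> r" using r that by fastforce
  hence earlier: "p (s x) \<notin> p ` {1..k} - {p (s r)}"
    using inj_image_mem_iff[OF permutes_inj[OF perm]] by (cases "x = r") auto
  have "i \<in> {1..k}" using r i_le_s[of r] row by simp
  hence "partial_cycle (Suc x) ` {1..k}
      = insert (partial_cycle x (s (Suc x))) (partial_cycle x ` {1..k} - {partial_cycle x i})"
    unfolding partial_cycle_Suc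
    using image_comp_transpose_out[OF permutes_inj[OF partial_cycle_permutes]] outside Suc.prems
    by simp
  also have "\<dots> = insert (p (s (Suc x))) (insert (p (s x)) (p ` {1..k} - {p (s r)}) - {p (s x)})"
    using Suc partial_cycle_row[of x] partial_cycle_other[of x "s (Suc x)"]
      s_notin_earlier[of x "Suc x"] by simp
  also have "\<dots> = insert (p (s (Suc x))) (p ` {1..k} - {p (s r)})"
    using earlier by simp
  finally show ?case .
qed

lemma cycle_image_before: "k < i \<Longrightarrow> p' ` {1..k} = p ` {1..k}"
  using partial_cycle_image_before greedy_cycle_eq_partial_cycle by simp

lemma cycle_image_after: "s m \<le> k \<Longrightarrow> p' ` {1..k} = p ` {1..k}"
  using partial_cycle_image_after[of m m k] greedy_cycle_eq_partial_cycle by simp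

lemma cycle_image_crossing:
  "r < m \<Longrightarrow> s r \<le> k \<Longrightarrow> k < s (Suc r) \<Longrightarrow> p' ` {1..k} = insert t (p ` {1..k} - {p (s r)})"
  using partial_cycle_image_crossing[of r k m] greedy_cycle_eq_partial_cycle p_s_m by simp

end

lemma card_below_exchange_ge:
  fixes P U :: "nat set"
  assumes "finite P" "z \<in> P" "t \<notin> P" "z < t"
    and le: "card (U \<inter> {..<a}) \<le> card (P \<inter> {..<a})"
    and less: "z < a \<Longrightarrow> a \<le> t \<Longrightarrow> card (U \<inter> {..<a}) < card (P \<inter> {..<a})"
  shows "card (U \<inter> {..<a}) \<le> card (insert t (P - {z}) \<inter> {..<a})"
proof -
  consider "a \<le> z" | "t < a" | "z < a" "a \<le> t" by linarith
  thus ?thesis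
  proof cases
    case 1
    hence "insert t (P - {z}) \<inter> {..<a} = P \<inter> {..<a}" using assms by auto
    thus ?thesis using le by simp
  next
    case 2
    hence "insert t (P - {z}) \<inter> {..<a} = insert t (P \<inter> {..<a} - {z})" "z \<in> P \<inter> {..<a}"
      using assms by auto
    thus ?thesis using le assms(1,3) by (simp add: card_Suc_Diff1)
  next
    case 3
    hence "insert t (P - {z}) \<inter> {..<a} = P \<inter> {..<a} - {z}" "z \<in> P \<inter> {..<a}"
      using assms by auto
    thus ?thesis using less[OF 3] assms(1) by simp
  qed
qed

lemma nat_step_crossing:
  fixes f :: "nat \<Rightarrow> nat"
  assumes "f 0 \<le> k" "k < f m"
  shows "\<exists>r<m. f r \<le> k \<and> k < f (Suc r)"
  using assms(2)
proof (induction m)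
  case (Suc m)
  thus ?case using assms(1) by (cases "k < f m") (auto intro: less_SucI)
qed (use assms(1) in simp)

locale greedy_cycle_competitor = greedy_cycle_data +
  fixes u :: "nat \<Rightarrow> nat"
  assumes target_in_column: "t \<in> u ` {1..c}"
    and target_rank: "card (u ` {1..c} \<inter> {..<t}) < i"
    and rows_above: "\<And>q. 1 \<le> q \<Longrightarrow> q < i \<Longrightarrow> p q < p i"
    and p_le_u: "ehresmann_le n p u"
begin

text \<open>Past the column, u's prefix contains t, while p's prefix has no value in (p (s r), t].\<close>
lemma count_gap_past_column:
  assumes r: "r < m" "s r \<le> k" "k < s (Suc r)" and "c \<le> k" "k \<le> n"
    and a: "p (s r) < a" "a \<le> t"
  shows "card (u ` {1..k} \<inter> {..<a}) < card (p ` {1..k} \<inter> {..<a})"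
proof -
  have "p ` {1..k} \<inter> {..<Suc t} = p ` {1..k} \<inter> {..<a}"
    using window_free_before_s[OF r(1)] r a by fastforce
  moreover have "t \<in> u ` {1..k}" using target_in_column \<open>c \<le> k\<close> by auto
  hence "insert t (u ` {1..k} \<inter> {..<a}) \<subseteq> u ` {1..k} \<inter> {..<Suc t}" using a by auto
  hence "card (insert t (u ` {1..k} \<inter> {..<a})) \<le> card (u ` {1..k} \<inter> {..<Suc t})"
    by (intro card_mono) auto
  hence "card (u ` {1..k} \<inter> {..<a}) < card (u ` {1..k} \<inter> {..<Suc t})" using a by simp
  moreover have "card (u ` {1..k} \<inter> {..<Suc t}) \<le> card (p ` {1..k} \<inter> {..<Suc t})"
    using p_le_u \<open>k \<le> n\<close> unfolding ehresmann_le_def by blast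
  ultimately show ?thesis by simp
qed

text \<open>Inside the column, u's prefix takes fewer than i values below t from the target column,
  while p 1, ..., p i all lie below a.\<close>
lemma count_gap_within_column:
  assumes r: "r < m" "s r \<le> k" "k < s (Suc r)" and "k < c"
    and a: "p (s r) < a" "a \<le> t"
  shows "card (u ` {1..k} \<inter> {..<a}) < card (p ` {1..k} \<inter> {..<a})"
proof -
  have "r = 0" using s_beyond_column[of r] r \<open>k < c\<close> by (cases r) auto
  have "card (u ` {1..k} \<inter> {..<a}) \<le> card (u ` {1..c} \<inter> {..<t})"
    using \<open>k < c\<close> a by (intro card_mono) auto
  also have "\<dots> < i" by (rule target_rank)
  also have "i = card (p ` {1..i})"
    using permutes_inj[OF perm] by (simp add: card_image inj_on_subset)
  also have "\<dots> \<le> card (p ` {1..k} \<inter> {..<a})"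
  proof (intro card_mono)
    show "p ` {1..i} \<subseteq> p ` {1..k} \<inter> {..<a}"
      using rows_above \<open>r = 0\<close> r a by (fastforce simp: le_less)
  qed simp
  finally show ?thesis .
qed

lemma cycle_ehresmann_le: "ehresmann_le n p' u"
  unfolding ehresmann_le_def
proof (intro allI impI)
  fix k a assume "k \<le> n"
  have base: "card (u ` {1..k} \<inter> {..<a}) \<le> card (p ` {1..k} \<inter> {..<a})"
    using p_le_u \<open>k \<le> n\<close> unfolding ehresmann_le_def by blast
  show "card (u ` {1..k} \<inter> {..<a}) \<le> card (p' ` {1..k} \<inter> {..<a})"
  proof (cases "k < i \<or> s m \<le> k")
    case True
    thus ?thesis using base cycle_image_before cycle_image_after by auto
  next
    case False
    then obtain r where r: "r < m" "s r \<le> k" "k < s (Suc r)"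
      using nat_step_crossing[of s k m] by auto
    have "s r \<in> {1..k}" using r i_le_s[of r] row by auto
    moreover have "s m \<notin> {1..k}" using False by auto
    ultimately have "p (s r) \<in> p ` {1..k}" "p (s m) \<notin> p ` {1..k}"
      by (simp_all add: inj_image_mem_iff[OF permutes_inj[OF perm]])
    moreover have "p (s r) < t" using p_s_less_target r by blast
    moreover have "card (u ` {1..k} \<inter> {..<a}) < card (p ` {1..k} \<inter> {..<a})"
      if "p (s r) < a" "a \<le> t"
      using count_gap_past_column[OF r _ \<open>k \<le> n\<close> that] count_gap_within_column[OF r _ that]
      by (cases "c \<le> k") auto
    ultimately show ?thesis
      unfolding cycle_image_crossing[OF r] using base p_s_m by (intro card_below_exchange_ge) auto
  qed
qed

end

section \<open>Processing a column\<close>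

lemma col_len_le: "col_len n lam j \<le> n"
  unfolding col_len_def by (rule order_trans[OF card_mono[of "{1..n}"]]) auto

lemma col_len_antimono: "j \<le> j' \<Longrightarrow> col_len n lam j' \<le> col_len n lam j"
  unfolding col_len_def by (intro card_mono) auto

locale sstableau =
  fixes n :: nat and lam :: "nat \<Rightarrow> nat" and T :: "nat \<Rightarrow> nat \<Rightarrow> nat"
  assumes sstableau: "is_sstableau n lam T"
begin

abbreviation cl :: "nat \<Rightarrow> nat" where
  "cl j \<equiv> col_len n lam j"

lemma entry_range: "1 \<le> j \<Longrightarrow> j \<le> lam 1 \<Longrightarrow> 1 \<le> q \<Longrightarrow> q \<le> cl j \<Longrightarrow> T j q \<in> {1..n}"
  using sstableau unfolding is_sstableau_def by blast

lemma row_mono: "1 \<le> j \<Longrightarrow> j + 1 \<le> lam 1 \<Longrightarrow> 1 \<le> q \<Longrightarrow> q \<le> cl (j + 1) \<Longrightarrow> T j q \<le> T (j + 1) q"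
  using sstableau unfolding is_sstableau_def by blast

lemma column_step: "1 \<le> j \<Longrightarrow> j \<le> lam 1 \<Longrightarrow> 1 \<le> q \<Longrightarrow> q + 1 \<le> cl j \<Longrightarrow> T j q < T j (q + 1)"
  using sstableau unfolding is_sstableau_def by blast

lemma column_strict_mono:
  assumes "1 \<le> j" "j \<le> lam 1" "1 \<le> q" "q < q'" "q' \<le> cl j"
  shows "T j q < T j q'"
  using assms(4,5)
proof (induction q')
  case (Suc q')
  have "T j q' < T j (Suc q')" using column_step[of j q'] assms(1-3) Suc.prems by simp
  thus ?case using Suc by (cases "q = q'") auto
qed simp

lemma column_rank:
  assumes "1 \<le> j" "j \<le> lam 1" "1 \<le> q" "q \<le> cl j"
  shows "card (col_set n lam T j \<inter> {..<T j q}) < q"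
proof -
  have "col_set n lam T j \<inter> {..<T j q} \<subseteq> T j ` {1..q - 1}"
  proof
    fix v assume "v \<in> col_set n lam T j \<inter> {..<T j q}"
    then obtain q' where q': "q' \<in> {1..cl j}" "v = T j q'" "T j q' < T j q"
      unfolding col_set_def by auto
    have "q' < q"
    proof (rule ccontr)
      assume "\<not> q' < q"
      hence "T j q \<le> T j q'"
        using column_strict_mono[of j q q'] assms q'(1) by (cases "q = q'") auto
      thus False using q'(3) by simp
    qed
    thus "v \<in> T j ` {1..q - 1}" using q'(1,2) by auto
  qed
  hence "card (col_set n lam T j \<inter> {..<T j q}) \<le> card (T j ` {1..q - 1})" by (intro card_mono) auto
  also have "\<dots> \<le> q - 1" using card_image_le[of "{1..q - 1}" "T j"] by simp
  finally show ?thesis using assms(3) by simp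
qed

text \<open>The state \<open>\<pi>\<close> = \<pi>^(j,i+1) of the greedy procedure inside column j, started from
  p0 = \<pi>^(j-1,1): rows up to i still show column j - 1, the rows below already show column j.\<close>
definition column_invariant :: "nat \<Rightarrow> (nat \<Rightarrow> nat) \<Rightarrow> nat \<Rightarrow> (nat \<Rightarrow> nat) \<Rightarrow> bool" where
  "column_invariant j p0 i \<pi> \<longleftrightarrow> \<pi> permutes {1..n}
     \<and> (\<forall>q. 1 \<le> q \<and> q \<le> i \<longrightarrow> \<pi> q = T (j - 1) q)
     \<and> (\<forall>q. i < q \<and> q \<le> cl j \<longrightarrow> \<pi> q = T j q)
     \<and> bruhat_le n p0 \<pi>
     \<and> (\<forall>u. u permutes {1..n} \<and> u ` {1..cl j} = col_set n lam T j \<and> ehresmann_le n p0 u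
           \<longrightarrow> ehresmann_le n \<pi> u)"

lemma greedy_cycle_data_at_row:
  assumes j: "2 \<le> j" "j \<le> lam 1" and r: "1 \<le> r" "r \<le> cl j"
    and perm: "\<pi> permutes {1..n}"
    and left: "\<And>q. 1 \<le> q \<Longrightarrow> q \<le> r \<Longrightarrow> \<pi> q = T (j - 1) q"
    and right: "\<And>q. r < q \<Longrightarrow> q \<le> cl j \<Longrightarrow> \<pi> q = T j q"
    and moves: "T (j - 1) r \<noteq> T j r"
  shows "greedy_cycle_data n (cl j) (T j r) r \<pi>"
proof
  have cl: "cl j \<le> cl (j - 1)" by (rule col_len_antimono) simp
  have "T (j - 1) r \<le> T j r" using row_mono[of "j - 1" r] j r by simp
  thus "\<pi> r < T j r" using left[of r] r moves by simp
  show "T j r \<le> n" using entry_range[of j r] j r by simp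
  show "cl j \<le> n" by (rule col_len_le)
  fix q assume q: "q \<in> {1..cl j}"
  consider "q < r" | "q = r" | "r < q" by linarith
  thus "\<not> (\<pi> r < \<pi> q \<and> \<pi> q \<le> T j r)"
  proof cases
    case 1
    moreover have "1 \<le> j - 1" "j - 1 \<le> lam 1" using j by auto
    ultimately show ?thesis
      using left[of q] left[of r] column_strict_mono[of "j - 1" q r] r q cl by simp
  next
    case 3
    thus ?thesis using right[of q] column_strict_mono[of j r q] j r q by simp
  qed simp
qed (use perm r in auto)

lemma greedy_cycle_ehresmann_least:
  assumes j: "2 \<le> j" "j \<le> lam 1" and r: "1 \<le> r" "r \<le> cl j"
    and perm: "\<pi> permutes {1..n}"
    and left: "\<And>q. 1 \<le> q \<Longrightarrow> q \<le> r \<Longrightarrow> \<pi> q = T (j - 1) q"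
    and right: "\<And>q. r < q \<Longrightarrow> q \<le> cl j \<Longrightarrow> \<pi> q = T j q"
    and moves: "T (j - 1) r \<noteq> T j r"
    and u: "u permutes {1..n}" "u ` {1..cl j} = col_set n lam T j" "ehresmann_le n \<pi> u"
  shows "ehresmann_le n (greedy_cycle n (cl j) (T j r) r \<pi>) u"
proof -
  interpret greedy_cycle_data n "cl j" "T j r" r \<pi>
    by (rule greedy_cycle_data_at_row[OF j r perm left right moves])
  interpret greedy_cycle_competitor n "cl j" "T j r" r \<pi> u
  proof
    show "T j r \<in> u ` {1..cl j}" using u r by (auto simp: col_set_def)
    show "card (u ` {1..cl j} \<inter> {..<T j r}) < r" using column_rank[of j r] u j r by simp
    show "\<pi> q < \<pi> r" if "1 \<le> q" "q < r" for q
      using left[of q] left[of r] column_strict_mono[of "j - 1" q r] that j r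
        col_len_antimono[of "j - 1" j n lam] by simp
  qed (use u in simp_all)
  show ?thesis by (rule cycle_ehresmann_le)
qed

lemma column_invariant_step:
  assumes j: "2 \<le> j" "j \<le> lam 1" and i: "Suc i \<le> cl j"
    and inv: "column_invariant j p0 (Suc i) \<pi>"
  shows "column_invariant j p0 i (greedy_step n lam T j (Suc i) \<pi>)"
proof -
  have perm: "\<pi> permutes {1..n}" and br: "bruhat_le n p0 \<pi>"
    and left: "\<And>q. 1 \<le> q \<Longrightarrow> q \<le> Suc i \<Longrightarrow> \<pi> q = T (j - 1) q"
    and right: "\<And>q. Suc i < q \<Longrightarrow> q \<le> cl j \<Longrightarrow> \<pi> q = T j q"
    and least: "\<And>u. u permutes {1..n} \<Longrightarrow> u ` {1..cl j} = col_set n lam T j \<Longrightarrow>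
      ehresmann_le n p0 u \<Longrightarrow> ehresmann_le n \<pi> u"
    using inv unfolding column_invariant_def by auto
  show ?thesis
  proof (cases "T (j - 1) (Suc i) = T j (Suc i)")
    case True
    hence "\<pi> q = T j q" if "i < q" "q \<le> cl j" for q
      using left[of q] right[of q] that by (cases "q = Suc i") auto
    thus ?thesis using True perm br left least
      unfolding column_invariant_def greedy_step_eq_greedy_cycle by auto
  next
    case False
    interpret greedy_cycle_data n "cl j" "T j (Suc i)" "Suc i" \<pi>
      using greedy_cycle_data_at_row[OF j _ i perm left right False] by simp
    have "ehresmann_le n p' u"
      if "u permutes {1..n}" "u ` {1..cl j} = col_set n lam T j" "ehresmann_le n p0 u" for u
      using greedy_cycle_ehresmann_least[OF j _ i perm left right False] that least by simp
    moreover have "p' q = T (j - 1) q" if "1 \<le> q" "q \<le> i" for q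
      using cycle_column[of q] left[of q] that i by simp
    moreover have "p' q = T j q" if "i < q" "q \<le> cl j" for q
      using cycle_row cycle_column[of q] right[of q] that by (cases "q = Suc i") auto
    ultimately show ?thesis using False cycle_permutes bruhat_le_trans[OF br cycle_bruhat_le]
      unfolding column_invariant_def greedy_step_eq_greedy_cycle by auto
  qed
qed

lemma column_invariant_fold:
  assumes j: "2 \<le> j" "j \<le> lam 1"
  shows "i \<le> cl j \<Longrightarrow> column_invariant j p0 i \<pi> \<Longrightarrow>
    column_invariant j p0 0 (fold (greedy_step n lam T j) (rev [1..<Suc i]) \<pi>)"
proof (induction i arbitrary: \<pi>)
  case (Suc i)
  thus ?case using column_invariant_step[OF j] by simp
qed simp

lemma greedy_col_column_invariant:
  assumes j: "2 \<le> j" "j \<le> lam 1" and perm: "p0 permutes {1..n}"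
    and prev: "\<And>q. 1 \<le> q \<Longrightarrow> q \<le> cl (j - 1) \<Longrightarrow> p0 q = T (j - 1) q"
  shows "column_invariant j p0 0 (greedy_col n lam T j p0)"
proof -
  have "cl j \<le> cl (j - 1)" by (rule col_len_antimono) simp
  hence "column_invariant j p0 (cl j) p0"
    unfolding column_invariant_def using perm prev by (auto simp: bruhat_le_def)
  thus ?thesis using column_invariant_fold[OF j order_refl] unfolding greedy_col_def by simp
qed

end

section \<open>The greedy chain\<close>

definition column_first_list :: "nat \<Rightarrow> nat set \<Rightarrow> nat list" where
  "column_first_list n C = sorted_list_of_set C @ sorted_list_of_set ({1..n} - C)"

definition column_first :: "nat \<Rightarrow> nat set \<Rightarrow> nat \<Rightarrow> nat" where
  "column_first n C k = (if 1 \<le> k \<and> k \<le> n then column_first_list n C ! (k - 1) else k)"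

lemma
  assumes "C \<subseteq> {1..n}"
  shows length_column_first_list: "length (column_first_list n C) = n"
    and set_column_first_list: "set (column_first_list n C) = {1..n}"
    and distinct_column_first_list: "distinct (column_first_list n C)"
proof -
  have "finite C" using assms finite_subset by blast
  thus "length (column_first_list n C) = n"
    using assms card_mono[OF finite_atLeastAtMost assms]
    by (simp add: column_first_list_def card_Diff_subset)
  show "set (column_first_list n C) = {1..n}" "distinct (column_first_list n C)"
    using assms \<open>finite C\<close> by (auto simp: column_first_list_def)
qed

lemma column_first_image:
  assumes "C \<subseteq> {1..n}" "k \<le> n"
  shows "column_first n C ` {1..k} = set (take k (column_first_list n C))"
proof -
  have "column_first n C ` {1..k} = column_first n C ` Suc ` {0..<k}"
    by (simp add: atLeastLessThanSuc_atLeastAtMost)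
  also have "\<dots> = nth (column_first_list n C) ` {0..<k}"
    unfolding image_image using assms(2) by (intro image_cong) (auto simp: column_first_def)
  also have "\<dots> = set (take k (column_first_list n C))"
    using assms by (simp add: length_column_first_list nth_image)
  finally show ?thesis .
qed

lemma column_first_permutes:
  assumes "C \<subseteq> {1..n}"
  shows "column_first n C permutes {1..n}"
proof (rule bij_imp_permutes)
  have "inj_on (column_first n C) {1..n}"
  proof (rule inj_onI)
    fix x y assume xy: "x \<in> {1..n}" "y \<in> {1..n}" "column_first n C x = column_first n C y"
    hence "column_first_list n C ! (x - 1) = column_first_list n C ! (y - 1)"
      by (simp add: column_first_def)
    moreover have "x - 1 < length (column_first_list n C)" "y - 1 < length (column_first_list n C)"
      using xy length_column_first_list[OF assms] by auto
    ultimately have "x - 1 = y - 1"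
      using nth_eq_iff_index_eq[OF distinct_column_first_list[OF assms]] by blast
    thus "x = y" using xy(1,2) by (simp only: atLeastAtMost_iff) linarith
  qed
  moreover have "column_first n C ` {1..n} = {1..n}"
    using column_first_image[OF assms order_refl] assms
    by (simp add: length_column_first_list set_column_first_list)
  ultimately show "bij_betw (column_first n C) {1..n} {1..n}" by (simp add: bij_betw_def)
qed (auto simp: column_first_def)

lemma card_below_take:
  fixes L :: "nat list"
  assumes "sorted_wrt (<) L"
  shows "card (set (take k L) \<inter> {..<a}) = min k (card (set L \<inter> {..<a}))"
  using assms
proof (induction L arbitrary: k)
  case (Cons x xs)
  hence sorted: "sorted_wrt (<) xs" and above: "\<forall>y\<in>set xs. x < y" by auto
  show ?case
  proof (cases k)
    case (Suc k')
    show ?thesis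
    proof (cases "x < a")
      case True
      have "x \<notin> set (take k' xs)" "x \<notin> set xs" using above by (auto dest: in_set_takeD)
      thus ?thesis using Cons.IH[OF sorted, of k'] Suc True by (simp add: Int_insert_left)
    next
      case False
      hence "set (take k (x # xs)) \<inter> {..<a} = {}" "set (x # xs) \<inter> {..<a} = {}"
        using above Suc False by (auto dest!: in_set_takeD)
      thus ?thesis by simp
    qed
  qed simp
qed simp

lemma card_below_le_take_sorted:
  fixes S X :: "nat set"
  assumes "finite S" "X \<subseteq> S" "card X \<le> k"
  shows "card (X \<inter> {..<a}) \<le> card (set (take k (sorted_list_of_set S)) \<inter> {..<a})"
proof -
  have "card (X \<inter> {..<a}) \<le> card (S \<inter> {..<a})"
    using assms by (intro card_mono) auto
  moreover have "card (X \<inter> {..<a}) \<le> k"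
    using assms card_mono[of X "X \<inter> {..<a}"] finite_subset by fastforce
  ultimately show ?thesis using assms(1) by (simp add: card_below_take)
qed

lemma column_first_ehresmann_least:
  assumes C: "C \<subseteq> {1..n}" and u: "u permutes {1..n}" "u ` {1..card C} = C"
  shows "ehresmann_le n (column_first n C) u"
  unfolding ehresmann_le_def
proof (intro allI impI)
  fix k a assume "k \<le> n"
  define R where "R = {1..n} - C"
  have fin: "finite C" "finite R" using C finite_subset unfolding R_def by auto
  have card_u: "card (u ` {1..k}) = k"
    using permutes_inj[OF u(1)] by (simp add: card_image inj_on_subset)
  have prefix: "column_first n C ` {1..k} = set (take k (sorted_list_of_set C))
    \<union> set (take (k - card C) (sorted_list_of_set R))"
    using column_first_image[OF C \<open>k \<le> n\<close>] fin
    by (auto simp: column_first_list_def R_def take_append)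
  show "card (u ` {1..k} \<inter> {..<a}) \<le> card (column_first n C ` {1..k} \<inter> {..<a})"
  proof (cases "k \<le> card C")
    case True
    hence "u ` {1..k} \<subseteq> C" using u(2) by auto
    thus ?thesis unfolding prefix using True fin card_u by (simp add: card_below_le_take_sorted)
  next
    case False
    have C_in: "C \<subseteq> u ` {1..k}"
      using u(2) False image_mono[of "{1..card C}" "{1..k}" u] by auto
    have split_u: "card (u ` {1..k} \<inter> {..<a})
        = card (C \<inter> {..<a}) + card ((u ` {1..k} - C) \<inter> {..<a})"
      using C_in fin by (subst card_Un_disjoint[symmetric]) (auto intro: arg_cong[where f = card])
    have split_prefix: "card (column_first n C ` {1..k} \<inter> {..<a}) = card (C \<inter> {..<a})
        + card (set (take (k - card C) (sorted_list_of_set R)) \<inter> {..<a})"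
      unfolding prefix using False fin
      by (subst card_Un_disjoint[symmetric])
        (auto simp: R_def dest: in_set_takeD intro: arg_cong[where f = card])
    have "u ` {1..k} - C \<subseteq> R" using permutes_image[OF u(1)] \<open>k \<le> n\<close> unfolding R_def by auto
    moreover have "card (u ` {1..k} - C) \<le> k - card C"
      using C_in card_u fin by (simp add: card_Diff_subset)
    ultimately show ?thesis
      using split_u split_prefix card_below_le_take_sorted[OF fin(2)] by simp
  qed
qed

context sstableau
begin

lemma column_inj_on: "1 \<le> j \<Longrightarrow> j \<le> lam 1 \<Longrightarrow> inj_on (T j) {1..cl j}"
  using column_strict_mono[of j]
  by (intro inj_onI) (metis atLeastAtMost_iff less_irrefl nat_neq_iff)

lemma card_col_set: "1 \<le> j \<Longrightarrow> j \<le> lam 1 \<Longrightarrow> card (col_set n lam T j) = cl j"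
  unfolding col_set_def by (subst card_image[OF column_inj_on]) simp_all

lemma col_set_subset: "1 \<le> j \<Longrightarrow> j \<le> lam 1 \<Longrightarrow> col_set n lam T j \<subseteq> {1..n}"
  unfolding col_set_def using entry_range[of j] by auto

lemma sorted_list_of_col_set:
  assumes "1 \<le> j" "j \<le> lam 1"
  shows "sorted_list_of_set (col_set n lam T j) = map (T j) [1..<Suc (cl j)]"
proof -
  have "sorted_wrt (<) (map (T j) [1..<Suc (cl j)])"
    unfolding sorted_wrt_map using column_strict_mono[of j] assms
    by (intro sorted_wrt_mono_rel[OF _ sorted_wrt_upt]) auto
  moreover have "set (map (T j) [1..<Suc (cl j)]) = col_set n lam T j"
    by (auto simp: col_set_def)
  moreover have "length (map (T j) [1..<Suc (cl j)]) = card (col_set n lam T j)"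
    using card_col_set[OF assms] by simp
  moreover have "finite (col_set n lam T j)" by (simp add: col_set_def)
  ultimately show ?thesis using sorted_list_of_set_unique[of "col_set n lam T j"] by blast
qed

lemma greedy_init_eq_column_first:
  assumes "1 \<le> lam 1"
  shows "greedy_init n lam T = column_first n (col_set n lam T 1)"
proof
  fix k
  have "length (sorted_list_of_set (col_set n lam T 1)) = cl 1"
    using card_col_set[of 1] assms by simp
  thus "greedy_init n lam T k = column_first n (col_set n lam T 1) k"
    using col_len_le[of n lam 1]
    by (auto simp: greedy_init_def column_first_def column_first_list_def Let_def nth_append
        diff_diff_left add.commute)
qed

lemma greedy_first_column:
  assumes "1 \<le> lam 1" "1 \<le> q" "q \<le> cl 1"
  shows "greedy n lam T 1 q = T 1 q"
proof -
  have "q \<le> n" "q - 1 < cl 1" using assms col_len_le[of n lam 1] by simp_all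
  thus ?thesis
    using assms greedy_init_eq_column_first sorted_list_of_col_set[of 1]
    by (simp add: column_first_def column_first_list_def nth_append del: upt_Suc)
qed

lemma greedy_Suc: "1 \<le> j \<Longrightarrow> greedy n lam T (Suc j) = greedy_col n lam T (Suc j) (greedy n lam T j)"
  by (cases j) auto

lemma greedy_column:
  "1 \<le> j \<Longrightarrow> j \<le> lam 1 \<Longrightarrow> greedy n lam T j permutes {1..n}
    \<and> (\<forall>q. 1 \<le> q \<and> q \<le> cl j \<longrightarrow> greedy n lam T j q = T j q)"
proof (induction j)
  case (Suc j)
  show ?case
  proof (cases "j = 0")
    case True
    thus ?thesis
      using Suc.prems col_set_subset[of 1] greedy_init_eq_column_first column_first_permutes
        greedy_first_column by auto
  next
    case False
    have "column_invariant (Suc j) (greedy n lam T j) 0 (greedy n lam T (Suc j))"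
      using greedy_col_column_invariant[of "Suc j" "greedy n lam T j"] Suc False greedy_Suc[of j]
      by simp
    thus ?thesis unfolding column_invariant_def by auto
  qed
qed simp

lemma greedy_column_invariant:
  "2 \<le> j \<Longrightarrow> j \<le> lam 1 \<Longrightarrow> column_invariant j (greedy n lam T (j - 1)) 0 (greedy n lam T j)"
  using greedy_col_column_invariant[of j "greedy n lam T (j - 1)"] greedy_column[of "j - 1"]
    greedy_Suc[of "j - 1"] by simp

lemma greedy_defining_chain: "defining_chain n lam T (greedy n lam T)"
  unfolding defining_chain_def
proof (intro conjI allI impI)
  fix j assume j: "1 \<le> j" "j < lam 1"
  show "bruhat_le n (greedy n lam T j) (greedy n lam T (j + 1))"
    using greedy_column_invariant[of "j + 1"] j unfolding column_invariant_def by simp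
next
  fix j assume j: "1 \<le> j" "j \<le> lam 1"
  show "greedy n lam T j permutes {1..n}" using greedy_column j by blast
  show "greedy n lam T j ` {1..cl j} = col_set n lam T j"
    using greedy_column[OF j] unfolding col_set_def by (intro image_cong) auto
qed

lemma greedy_ehresmann_least:
  assumes j: "1 \<le> j" "j \<le> lam 1" and u: "u permutes {1..n}" "u ` {1..cl j} = col_set n lam T j"
    and prev: "1 < j \<Longrightarrow> ehresmann_le n (greedy n lam T (j - 1)) u"
  shows "ehresmann_le n (greedy n lam T j) u"
proof (cases "j = 1")
  case True
  thus ?thesis
    using u j greedy_init_eq_column_first column_first_ehresmann_least col_set_subset card_col_set
    by simp
next
  case False
  thus ?thesis
    using greedy_column_invariant[of j] j u prev unfolding column_invariant_def by simp
qed

lemma minimal_defining_chain_eq_greedy: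
  assumes "minimal_defining_chain n lam T w"
  shows "1 \<le> j \<Longrightarrow> j \<le> lam 1 \<Longrightarrow> w j = greedy n lam T j"
proof (induction j)
  case (Suc j)
  have w: "w (Suc j) permutes {1..n}" "w (Suc j) ` {1..cl (Suc j)} = col_set n lam T (Suc j)"
    and w_mono: "1 \<le> j \<Longrightarrow> bruhat_le n (w j) (w (Suc j))"
    using assms Suc.prems unfolding minimal_defining_chain_def defining_chain_def by auto
  have "bruhat_le n (w (Suc j)) (greedy n lam T (Suc j))"
    using assms greedy_defining_chain Suc.prems unfolding minimal_defining_chain_def by blast
  moreover have "ehresmann_le n (greedy n lam T (Suc j)) (w (Suc j))"
    using greedy_ehresmann_least[OF Suc.prems w] Suc w_mono bruhat_le_ehresmann_le by simp
  ultimately show ?case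
    using ehresmann_le_antisym[OF w(1) greedy_column[THEN conjunct1, OF Suc.prems]]
      bruhat_le_ehresmann_le by blast
qed simp

end

theorem proposition6p1:
  fixes n :: nat and lam :: "nat \<Rightarrow> nat" and T :: "nat \<Rightarrow> nat \<Rightarrow> nat"
    and w :: "nat \<Rightarrow> nat \<Rightarrow> nat"
  assumes "1 \<le> n"
    and "is_npartition n lam"
    and "lam n = 0"
    and "\<exists>i\<in>{1..n}. lam i \<noteq> 0"
    and "is_sstableau n lam T"
    and "minimal_defining_chain n lam T w"
  shows "\<forall>j. 1 \<le> j \<longrightarrow> j \<le> lam 1 \<longrightarrow> w j = greedy n lam T j"
proof -
  interpret sstableau n lam T by (rule sstableau.intro) fact
  show ?thesis using minimal_defining_chain_eq_greedy[OF assms(6)] by blast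
qed

end
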